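(* Let $\lambda>0$, $K(\lambda, z) = \left(\frac{\cos \pi z}{\pi}\right)\sum_{n \in \mathbb{Z}} \frac{ (-1)^{n}\, e^{-\lambda|n- \frac{1}{2}|}}{z - n + \frac{1}{2}}$, and $\widehat{K}(\lambda,t)=\int_{-\infty}^\infty K(\lambda,x)e(-tx)\,\mathrm{d}x$ for $t\in\mathbb{R}$. Then for $|t|\le\frac12$, $$\widehat{K}(\lambda,t)=\frac{\sinh(\frac{\lambda}{2})\cos\pi t}{\sinh^2(\frac{\lambda}{2})+\sin^2\pi t},$$ and $\widehat{K}(\lambda,t)\ge 0$ for all $t\in\mathbb{R}$.
   Context: $e(z)=e^{2\pi iz}$. The function $x\mapsto K(\lambda,x)$ is integrable on $\mathbb{R}$, and $\widehat K(\lambda,\cdot)$ is continuous and supported in $[-\frac12,\frac12]$. *)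

theory Defs
  imports "HOL-Analysis.Analysis"
begin

definition e :: "complex \<Rightarrow> complex" where
  "e z = exp (2 * complex_of_real pi * \<i> * z)"

definition K :: "real \<Rightarrow> real \<Rightarrow> real" where
  "K lam x = (cos (pi * x) / pi) *
     (\<Sum>\<^sub>\<infinity> n \<in> (UNIV :: int set).
        ((-1) powi n) * exp (- lam * \<bar>real_of_int n - 1/2\<bar>) / (x - real_of_int n + 1/2))"

definition Khat :: "real \<Rightarrow> real \<Rightarrow> complex" where
  "Khat lam t = (LINT x|lborel. complex_of_real (K lam x) * e (complex_of_real (- t * x)))"

end

theory Submission
  imports Defs "HOL-Probability.Probability"
begin

text \<open>
  On [-1/2, 1/2] the claimed transform F(s) = sinh(lam/2) cos(pi s) / (sinh(lam/2)^2 + sin(pi s)^2)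
  is the cosine series sum_k 2 exp(-lam (k + 1/2)) cos(2 pi (k + 1/2) s). Integrating this series
  term by term against e(s x) over [-1/2, 1/2] gives a series of sinc functions which regroups into
  the series defining K(lam, x) wherever cos(pi x) is nonzero, so K(lam, -) is almost everywhere the
  inverse Fourier transform of F cut off outside [-1/2, 1/2]. Because F is smooth and vanishes at
  -1/2 and 1/2, two integrations by parts show that this inverse transform decays like 1/x^2, hence
  is integrable, and Fourier inversion (via Gaussian regularisation and Fubini) identifies Khat(lam, -)
  with the cut-off F. Nonnegativity is read off the closed form, as cos(pi t) >= 0 on [-1/2, 1/2].
\<close>

section \<open>Fourier transforms on the real line\<close>

lemma has_vector_derivative_iexp_scaled[derivative_intros]:
  "((\<lambda>s. iexp (w * s)) has_vector_derivative \<i> * w * iexp (w * s)) (at s within S)"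
proof -
  have "((\<lambda>z. exp (\<i> * w * z)) has_field_derivative \<i> * w * exp (\<i> * w * s)) (at (of_real s))"
    by (auto intro!: derivative_eq_intros)
  from has_vector_derivative_real_field[OF this] show ?thesis by (simp add: mult.assoc)
qed

lemma integral_iexp_by_parts_twice:
  fixes f f' f'' :: "real \<Rightarrow> complex" and a b w :: real
  assumes "a \<le> b" "w \<noteq> 0"
    and f: "\<And>s. s \<in> {a..b} \<Longrightarrow> (f has_vector_derivative f' s) (at s within {a..b})"
    and f': "\<And>s. s \<in> {a..b} \<Longrightarrow> (f' has_vector_derivative f'' s) (at s within {a..b})"
    and f''_cont: "continuous_on {a..b} f''"
    and "f a = 0" "f b = 0"
  shows "integral {a..b} (\<lambda>s. f s * iexp (w * s)) =
    (f' b * iexp (w * b) - f' a * iexp (w * a) - integral {a..b} (\<lambda>s. f'' s * iexp (w * s))) / w\<^sup>2"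
proof -
  define c where "c = complex_of_real (1 / w\<^sup>2)"
  define H where "H s = (f' s - \<i> * w * f s) * iexp (w * s) * c" for s
  have w2: "complex_of_real w * complex_of_real w * c = 1"
    using \<open>w \<noteq> 0\<close> by (simp add: c_def power2_eq_square flip: of_real_mult)
  have "(H has_vector_derivative f s * iexp (w * s) + f'' s * iexp (w * s) * c) (at s within {a..b})"
    if "s \<in> {a..b}" for s
  proof -
    have "(H has_vector_derivative ((f' s - \<i> * w * f s) * (\<i> * w * iexp (w * s)) + (f'' s - \<i> * w * f' s) * iexp (w * s)) * c)
        (at s within {a..b})"
      unfolding H_def
      by (rule derivative_eq_intros f[OF that] f'[OF that] has_vector_derivative_iexp_scaled refl)+ simp
    moreover have "((f' s - \<i> * w * f s) * (\<i> * w * iexp (w * s)) + (f'' s - \<i> * w * f' s) * iexp (w * s)) * c =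
        (complex_of_real w * complex_of_real w * c) * f s * iexp (w * s) + f'' s * iexp (w * s) * c"
      by (simp add: algebra_simps)
    ultimately show ?thesis
      unfolding w2 by simp
  qed
  then have "((\<lambda>s. f s * iexp (w * s) + f'' s * iexp (w * s) * c) has_integral H b - H a) {a..b}"
    by (intro fundamental_theorem_of_calculus \<open>a \<le> b\<close>)
  moreover have "((\<lambda>s. f'' s * iexp (w * s) * c) has_integral integral {a..b} (\<lambda>s. f'' s * iexp (w * s)) * c) {a..b}"
    by (intro has_integral_mult_left integrable_integral integrable_continuous_interval continuous_intros f''_cont)
  ultimately have "((\<lambda>s. (f s * iexp (w * s) + f'' s * iexp (w * s) * c) - f'' s * iexp (w * s) * c) has_integral
      H b - H a - integral {a..b} (\<lambda>s. f'' s * iexp (w * s)) * c) {a..b}"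
    by (rule has_integral_diff)
  then have "((\<lambda>s. f s * iexp (w * s)) has_integral H b - H a - integral {a..b} (\<lambda>s. f'' s * iexp (w * s)) * c) {a..b}"
    by simp
  moreover have "H b - H a = (f' b * iexp (w * b) - f' a * iexp (w * a)) * c"
    unfolding H_def using \<open>f a = 0\<close> \<open>f b = 0\<close> by (simp add: left_diff_distrib)
  ultimately have "integral {a..b} (\<lambda>s. f s * iexp (w * s)) =
      (f' b * iexp (w * b) - f' a * iexp (w * a) - integral {a..b} (\<lambda>s. f'' s * iexp (w * s))) * c"
    by (simp add: integral_unique left_diff_distrib)
  then show ?thesis
    by (simp add: c_def)
qed

lemma integral_iexp_inverse_square_decay:
  fixes f f' f'' :: "real \<Rightarrow> complex" and a b :: real
  assumes "a \<le> b"
    and f: "\<And>s. s \<in> {a..b} \<Longrightarrow> (f has_vector_derivative f' s) (at s within {a..b})"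
    and f': "\<And>s. s \<in> {a..b} \<Longrightarrow> (f' has_vector_derivative f'' s) (at s within {a..b})"
    and f''_cont: "continuous_on {a..b} f''"
    and fa: "f a = 0" and fb: "f b = 0"
  obtains C where "\<And>w. w \<noteq> 0 \<Longrightarrow> norm (integral {a..b} (\<lambda>s. f s * iexp (w * s))) \<le> C / w\<^sup>2"
proof -
  have "bounded (f'' ` {a..b})"
    by (intro compact_imp_bounded compact_continuous_image f''_cont compact_Icc)
  then obtain M where M: "\<And>s. s \<in> {a..b} \<Longrightarrow> norm (f'' s) \<le> M"
    unfolding bounded_iff by blast
  have "norm (integral {a..b} (\<lambda>s. f s * iexp (w * s))) \<le> (norm (f' b) + norm (f' a) + M * (b - a)) / w\<^sup>2"
    if "w \<noteq> 0" for w
  proof -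
    have "norm (integral {a..b} (\<lambda>s. f'' s * iexp (w * s))) \<le> M * (b - a)"
      using M by (intro integral_bound \<open>a \<le> b\<close> continuous_intros f''_cont) (simp add: norm_mult)
    then have "norm (f' b * iexp (w * b) - f' a * iexp (w * a) - integral {a..b} (\<lambda>s. f'' s * iexp (w * s)))
        \<le> norm (f' b) + norm (f' a) + M * (b - a)"
      using norm_triangle_ineq4[of "f' b * iexp (w * b) - f' a * iexp (w * a)" "integral {a..b} (\<lambda>s. f'' s * iexp (w * s))"]
        norm_triangle_ineq4[of "f' b * iexp (w * b)" "f' a * iexp (w * a)"]
      by (simp add: norm_mult del: of_real_mult)
    moreover have "norm (integral {a..b} (\<lambda>s. f s * iexp (w * s))) =
        norm (f' b * iexp (w * b) - f' a * iexp (w * a) - integral {a..b} (\<lambda>s. f'' s * iexp (w * s))) / w\<^sup>2"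
      by (simp only: integral_iexp_by_parts_twice[OF \<open>a \<le> b\<close> that f f' f''_cont fa fb]
          norm_divide norm_of_real abs_power2)
    ultimately show ?thesis
      by (simp add: divide_right_mono)
  qed
  then show ?thesis using that by blast
qed

lemma integrable_bounded_inverse_square_decay:
  fixes g :: "real \<Rightarrow> 'a::{banach, second_countable_topology}"
  assumes g: "g \<in> borel_measurable lborel"
    and B: "\<And>x. norm (g x) \<le> B" and C: "\<And>x. x \<noteq> 0 \<Longrightarrow> norm (g x) \<le> C / x\<^sup>2"
  shows "integrable lborel g"
proof (rule Bochner_Integration.integrable_bound)
  show "integrable lborel (\<lambda>x. 2 * (B + C) * inverse (1 + x\<^sup>2))"
    using integrable_inverse_1_plus_square by (simp add: set_integrable_def)
  have "0 \<le> B" using order_trans[OF norm_ge_zero B] .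
  have "0 \<le> C" using order_trans[OF norm_ge_zero C[of 1]] by simp
  have "norm (g x) \<le> 2 * (B + C) * inverse (1 + x\<^sup>2)" for x
  proof (cases "x\<^sup>2 \<le> 1")
    case True
    have "norm (g x) \<le> B" by (fact B)
    also have "B \<le> 2 * (B + C) * inverse (1 + x\<^sup>2)"
      using mult_left_le[OF True \<open>0 \<le> B\<close>] \<open>0 \<le> C\<close> by (simp add: field_simps add_pos_nonneg)
    finally show ?thesis .
  next
    case False
    then have "x \<noteq> 0" by auto
    have "norm (g x) \<le> C / x\<^sup>2" using C[OF \<open>x \<noteq> 0\<close>] .
    also have "C / x\<^sup>2 \<le> 2 * (B + C) * inverse (1 + x\<^sup>2)"
    proof -
      have "C * (1 + x\<^sup>2) \<le> 2 * (B + C) * x\<^sup>2"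
        using mult_left_mono[of 1 "x\<^sup>2" C] False \<open>0 \<le> C\<close> mult_nonneg_nonneg[OF \<open>0 \<le> B\<close> zero_le_power2[of x]]
        by (simp add: algebra_simps)
      then show ?thesis
        using \<open>x \<noteq> 0\<close> by (simp add: field_simps add_pos_nonneg)
    qed
    finally show ?thesis .
  qed
  then show "AE x in lborel. norm (g x) \<le> norm (2 * (B + C) * inverse (1 + x\<^sup>2))"
    by (intro AE_I2) (simp add: \<open>0 \<le> B\<close> \<open>0 \<le> C\<close>)
qed (fact g)

definition fourier_transform :: "(real \<Rightarrow> complex) \<Rightarrow> real \<Rightarrow> complex" where
  "fourier_transform f t = (LINT x|lborel. f x * iexp (- 2 * pi * t * x))"

definition inv_fourier_transform :: "(real \<Rightarrow> complex) \<Rightarrow> real \<Rightarrow> complex" where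
  "inv_fourier_transform f x = (LINT s|lborel. f s * iexp (2 * pi * s * x))"

lemma integrable_mult_iexp:
  fixes f :: "real \<Rightarrow> complex"
  assumes "integrable lborel f"
  shows "integrable lborel (\<lambda>s. f s * iexp (c * s))"
proof (rule Bochner_Integration.integrable_bound[OF assms])
  have [measurable]: "f \<in> borel_measurable borel"
    using borel_measurable_integrable[OF assms] by simp
  show "(\<lambda>s. f s * iexp (c * s)) \<in> borel_measurable lborel"
    by measurable
qed (simp add: norm_mult)

lemma norm_inv_fourier_transform_le: "norm (inv_fourier_transform f x) \<le> (LINT s|lborel. norm (f s))"
  unfolding inv_fourier_transform_def
  using integral_norm_bound[of lborel "\<lambda>s. f s * iexp (2 * pi * s * x)"] by (simp add: norm_mult del: of_real_mult)

lemma borel_measurable_inv_fourier_transform [measurable]: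
  assumes [measurable]: "f \<in> borel_measurable borel"
  shows "inv_fourier_transform f \<in> borel_measurable lborel"
  unfolding inv_fourier_transform_def by measurable

lemma inv_fourier_transform_indicator_Icc:
  fixes f :: "real \<Rightarrow> complex"
  assumes "continuous_on {a..b} f"
  shows "inv_fourier_transform (\<lambda>s. indicator {a..b} s *\<^sub>R f s) x = integral {a..b} (\<lambda>s. f s * iexp (2 * pi * x * s))"
proof -
  have "set_integrable lborel {a..b} (\<lambda>s. f s * iexp (2 * pi * x * s))"
    unfolding set_integrable_def using assms by (intro borel_integrable_compact compact_Icc continuous_intros)
  then have "(LINT s:{a..b}|lborel. f s * iexp (2 * pi * x * s)) = integral {a..b} (\<lambda>s. f s * iexp (2 * pi * x * s))"
    by (rule set_borel_integral_eq_integral)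
  then show ?thesis
    unfolding inv_fourier_transform_def set_lebesgue_integral_def by (simp add: mult_ac)
qed

lemma integrable_inv_fourier_transform_C2_cutoff:
  fixes f f' f'' :: "real \<Rightarrow> complex" and a b :: real
  assumes "a \<le> b"
    and f: "\<And>s. s \<in> {a..b} \<Longrightarrow> (f has_vector_derivative f' s) (at s within {a..b})"
    and f': "\<And>s. s \<in> {a..b} \<Longrightarrow> (f' has_vector_derivative f'' s) (at s within {a..b})"
    and f''_cont: "continuous_on {a..b} f''"
    and fa: "f a = 0" and fb: "f b = 0"
  shows "integrable lborel (inv_fourier_transform (\<lambda>s. indicator {a..b} s *\<^sub>R f s))"
proof -
  have "continuous_on {a..b} f"
    using f by (rule continuous_on_vector_derivative)
  then have "integrable lborel (\<lambda>s. indicator {a..b} s *\<^sub>R f s)"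
    by (intro borel_integrable_compact compact_Icc)
  then have [measurable]: "(\<lambda>s. indicator {a..b} s *\<^sub>R f s) \<in> borel_measurable borel"
    using borel_measurable_integrable by simp
  obtain C where C: "\<And>w. w \<noteq> 0 \<Longrightarrow> norm (integral {a..b} (\<lambda>s. f s * iexp (w * s))) \<le> C / w\<^sup>2"
    using integral_iexp_inverse_square_decay[OF assms] by blast
  show ?thesis
  proof (rule integrable_bounded_inverse_square_decay)
    show "norm (inv_fourier_transform (\<lambda>s. indicator {a..b} s *\<^sub>R f s) x) \<le> C / (2 * pi)\<^sup>2 / x\<^sup>2"
      if "x \<noteq> 0" for x
      using C[of "2 * pi * x"] that
      by (simp add: inv_fourier_transform_indicator_Icc[OF \<open>continuous_on {a..b} f\<close>] power_mult_distrib)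
  qed (use norm_inv_fourier_transform_le in auto)
qed

lemma integral_std_normal_density_iexp:
  "(LINT y|lborel. std_normal_density y *\<^sub>R iexp (u * y)) = exp (- u\<^sup>2 / 2)"
proof -
  have "char std_normal_distribution u = (LINT y|lborel. std_normal_density y *\<^sub>R iexp (u * y))"
    unfolding char_def by (rule integral_density) auto
  then show ?thesis by (simp add: char_std_normal_distribution)
qed

lemma integral_iexp_gaussian:
  fixes \<epsilon> u :: real
  assumes "\<epsilon> > 0"
  shows "(LINT x|lborel. iexp (u * x) * exp (- (\<epsilon> * x)\<^sup>2 / 2)) =
    sqrt (2 * pi) / \<epsilon> * exp (- (u / \<epsilon>)\<^sup>2 / 2)"
proof -
  have "(LINT x|lborel. iexp (u * x) * exp (- (\<epsilon> * x)\<^sup>2 / 2)) =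
      \<bar>1 / \<epsilon>\<bar> *\<^sub>R (LINT y|lborel. iexp (u * (0 + 1 / \<epsilon> * y)) * exp (- (\<epsilon> * (0 + 1 / \<epsilon> * y))\<^sup>2 / 2))"
    by (rule lborel_integral_real_affine) (use assms in simp)
  also have "\<dots> = \<bar>1 / \<epsilon>\<bar> *\<^sub>R (LINT y|lborel. sqrt (2 * pi) *\<^sub>R (std_normal_density y *\<^sub>R iexp (u / \<epsilon> * y)))"
    using assms by (simp add: std_normal_density_def scaleR_conv_of_real mult_ac)
  also have "\<dots> = sqrt (2 * pi) / \<epsilon> * exp (- (u / \<epsilon>)\<^sup>2 / 2)"
    by (simp only: integral_scaleR_right integral_std_normal_density_iexp)
      (use assms in \<open>simp add: scaleR_conv_of_real\<close>)
  finally show ?thesis .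
qed

lemma integrable_gaussian:
  assumes "(\<epsilon>::real) > 0"
  shows "integrable lborel (\<lambda>x. exp (- (\<epsilon> * x)\<^sup>2 / 2))"
proof -
  have "integrable lborel (\<lambda>y. sqrt (2 * pi) * (std_normal_density y * y ^ 0))"
    by (intro integrable_mult_right integrable_std_normal_moment)
  then have "integrable lborel (\<lambda>y::real. exp (- y\<^sup>2 / 2))"
    by (simp add: std_normal_density_def)
  from lborel_integrable_real_affine[OF this, of \<epsilon> 0] assms show ?thesis
    by simp
qed

lemma integral_gaussian_kernel_rescale:
  fixes f :: "real \<Rightarrow> complex" and \<epsilon> t :: real
  assumes "\<epsilon> > 0"
  shows "(LINT s|lborel. f s * (sqrt (2 * pi) / \<epsilon> * exp (- (2 * pi * (s - t) / \<epsilon>)\<^sup>2 / 2))) =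
    (LINT v|lborel. std_normal_density v *\<^sub>R f (t + \<epsilon> / (2 * pi) * v))"
proof -
  define h where "h s = sqrt (2 * pi) / \<epsilon> * exp (- (2 * pi * (s - t) / \<epsilon>)\<^sup>2 / 2)" for s
  have "(LINT s|lborel. f s * h s) =
      \<bar>\<epsilon> / (2 * pi)\<bar> *\<^sub>R (LINT v|lborel. f (t + \<epsilon> / (2 * pi) * v) * h (t + \<epsilon> / (2 * pi) * v))"
    by (rule lborel_integral_real_affine) (use \<open>\<epsilon> > 0\<close> in simp)
  also have "\<dots> = (LINT v|lborel. std_normal_density v *\<^sub>R f (t + \<epsilon> / (2 * pi) * v))"
    unfolding integral_scaleR_right[symmetric]
  proof (rule Bochner_Integration.integral_cong[OF refl])
    fix v
    have c: "\<bar>\<epsilon> / (2 * pi)\<bar> * (sqrt (2 * pi) / \<epsilon>) = 1 / sqrt (2 * pi)"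
      using \<open>\<epsilon> > 0\<close> real_sqrt_mult_self[of "2 * pi"] by (simp add: field_simps)
    have "2 * pi * (t + \<epsilon> / (2 * pi) * v - t) / \<epsilon> = v"
      using \<open>\<epsilon> > 0\<close> by simp
    then have "\<bar>\<epsilon> / (2 * pi)\<bar> * h (t + \<epsilon> / (2 * pi) * v) =
        \<bar>\<epsilon> / (2 * pi)\<bar> * (sqrt (2 * pi) / \<epsilon>) * exp (- v\<^sup>2 / 2)"
      by (simp add: h_def)
    also have "\<dots> = std_normal_density v"
      unfolding c by (simp add: std_normal_density_def)
    finally have density: "\<bar>\<epsilon> / (2 * pi)\<bar> * h (t + \<epsilon> / (2 * pi) * v) = std_normal_density v" .
    have "\<bar>\<epsilon> / (2 * pi)\<bar> *\<^sub>R (f (t + \<epsilon> / (2 * pi) * v) * h (t + \<epsilon> / (2 * pi) * v)) =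
        (\<bar>\<epsilon> / (2 * pi)\<bar> * h (t + \<epsilon> / (2 * pi) * v)) *\<^sub>R f (t + \<epsilon> / (2 * pi) * v)"
      by (simp only: scaleR_conv_of_real of_real_mult mult_ac)
    then show "\<bar>\<epsilon> / (2 * pi)\<bar> *\<^sub>R (f (t + \<epsilon> / (2 * pi) * v) * h (t + \<epsilon> / (2 * pi) * v)) =
        std_normal_density v *\<^sub>R f (t + \<epsilon> / (2 * pi) * v)"
      unfolding density .
  qed
  finally show ?thesis
    unfolding h_def .
qed

lemma fourier_transform_gaussian_regularized:
  fixes f :: "real \<Rightarrow> complex" and \<epsilon> t :: real
  assumes f: "integrable lborel f" and "\<epsilon> > 0"
  shows "(LINT x|lborel. inv_fourier_transform f x * iexp (- 2 * pi * t * x) * exp (- (\<epsilon> * x)\<^sup>2 / 2)) =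
    (LINT v|lborel. std_normal_density v *\<^sub>R f (t + \<epsilon> / (2 * pi) * v))"
proof -
  have [measurable]: "f \<in> borel_measurable borel"
    using borel_measurable_integrable[OF f] by simp
  define g where "g x = exp (- (\<epsilon> * x)\<^sup>2 / 2)" for x
  define h where "h s = sqrt (2 * pi) / \<epsilon> * exp (- (2 * pi * (s - t) / \<epsilon>)\<^sup>2 / 2)" for s
  define F where "F x s = f s * iexp (2 * pi * s * x) * (iexp (- 2 * pi * t * x) * g x)" for x s
  have F_int: "integrable lborel (F x)" for x
  proof -
    have "integrable lborel (\<lambda>s. f s * iexp (2 * pi * x * s))"
      by (rule integrable_mult_iexp[OF f])
    then show ?thesis
      unfolding F_def by (intro integrable_mult_left) (simp add: mult_ac)
  qed
  have "integrable (lborel \<Otimes>\<^sub>M lborel) (case_prod F)"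
  proof (rule lborel_pair.Fubini_integrable)
    show "case_prod F \<in> borel_measurable (lborel \<Otimes>\<^sub>M lborel)"
      unfolding F_def g_def by measurable
    have "(\<lambda>x. \<integral>s. norm (F x s) \<partial>lborel) = (\<lambda>x. (\<integral>s. norm (f s) \<partial>lborel) * g x)"
      by (simp add: F_def g_def norm_mult)
    then show "integrable lborel (\<lambda>x. \<integral>s. norm (case_prod F (x, s)) \<partial>lborel)"
      using integrable_gaussian[OF \<open>\<epsilon> > 0\<close>] by (simp add: g_def)
  qed (simp add: F_int)
  then have "(LINT x|lborel. LINT s|lborel. F x s) = (LINT s|lborel. LINT x|lborel. F x s)"
    by (rule lborel_pair.Fubini_integral[symmetric])
  moreover have "(LINT s|lborel. F x s) = inv_fourier_transform f x * iexp (- 2 * pi * t * x) * g x" for x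
    unfolding F_def inv_fourier_transform_def integral_mult_left_zero by (simp add: mult.assoc)
  moreover have "(LINT x|lborel. F x s) = f s * h s" for s
  proof -
    have "F x s = f s * (iexp (2 * pi * (s - t) * x) * g x)" for x
      unfolding F_def by (simp add: exp_add[symmetric] algebra_simps)
    then show ?thesis
      using integral_iexp_gaussian[OF \<open>\<epsilon> > 0\<close>, of "2 * pi * (s - t)"] by (simp add: g_def h_def)
  qed
  ultimately have "(LINT x|lborel. inv_fourier_transform f x * iexp (- 2 * pi * t * x) * g x) =
      (LINT s|lborel. f s * h s)"
    by simp
  also have "\<dots> = (LINT v|lborel. std_normal_density v *\<^sub>R f (t + \<epsilon> / (2 * pi) * v))"
    unfolding h_def by (rule integral_gaussian_kernel_rescale[OF \<open>\<epsilon> > 0\<close>])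
  finally show ?thesis by (simp add: g_def)
qed

lemma tendsto_integral_std_normal_density_shift:
  fixes f :: "real \<Rightarrow> complex"
  assumes [measurable]: "f \<in> borel_measurable borel"
    and f_bounded: "\<And>s. norm (f s) \<le> M" and "isCont f t" and "c \<longlonglongrightarrow> 0"
  shows "(\<lambda>n. LINT v|lborel. std_normal_density v *\<^sub>R f (t + c n * v)) \<longlonglongrightarrow> f t"
proof -
  have "(\<lambda>n. LINT v|lborel. std_normal_density v *\<^sub>R f (t + c n * v))
      \<longlonglongrightarrow> (LINT v|lborel. std_normal_density v *\<^sub>R f t)"
  proof (rule integral_dominated_convergence[where w="\<lambda>v. M * std_normal_density v"])
    show "integrable lborel (\<lambda>v. M * std_normal_density v)"
      using integrable_std_normal_moment[of 0] by (intro integrable_mult_right) simp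
    show "AE v in lborel. (\<lambda>n. std_normal_density v *\<^sub>R f (t + c n * v)) \<longlonglongrightarrow> std_normal_density v *\<^sub>R f t"
    proof (rule AE_I2)
      fix v
      have "(\<lambda>n. t + c n * v) \<longlonglongrightarrow> t + 0 * v"
        by (intro tendsto_intros \<open>c \<longlonglongrightarrow> 0\<close>)
      then have "(\<lambda>n. t + c n * v) \<longlonglongrightarrow> t"
        by simp
      from isCont_tendsto_compose[OF \<open>isCont f t\<close> this]
      show "(\<lambda>n. std_normal_density v *\<^sub>R f (t + c n * v)) \<longlonglongrightarrow> std_normal_density v *\<^sub>R f t"
        by (intro tendsto_scaleR tendsto_const)
    qed
    show "AE v in lborel. norm (std_normal_density v *\<^sub>R f (t + c n * v)) \<le> M * std_normal_density v" for n
      by (intro AE_I2) (simp add: mult.commute[of M] mult_left_mono[OF f_bounded])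
  qed simp_all
  then show ?thesis
    by (simp add: integral_scaleR_left)
qed

theorem fourier_inversion:
  fixes f :: "real \<Rightarrow> complex"
  assumes f: "integrable lborel f" and f_bounded: "\<And>s. norm (f s) \<le> M" and "isCont f t"
    and g: "integrable lborel (inv_fourier_transform f)"
  shows "fourier_transform (inv_fourier_transform f) t = f t"
proof -
  have f_meas [measurable]: "f \<in> borel_measurable borel"
    and [measurable]: "inv_fourier_transform f \<in> borel_measurable borel"
    using borel_measurable_integrable[OF f] borel_measurable_integrable[OF g] by simp_all
  define \<epsilon> where "\<epsilon> n = inverse (real (Suc n))" for n
  have "\<epsilon> n > 0" for n
    by (simp add: \<epsilon>_def)
  have "\<epsilon> \<longlonglongrightarrow> 0"
    unfolding \<epsilon>_def by (rule LIMSEQ_inverse_real_of_nat)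
  have "(\<lambda>n. LINT x|lborel. inv_fourier_transform f x * iexp (- 2 * pi * t * x) * exp (- (\<epsilon> n * x)\<^sup>2 / 2))
      \<longlonglongrightarrow> fourier_transform (inv_fourier_transform f) t"
    unfolding fourier_transform_def
  proof (rule integral_dominated_convergence[where w="\<lambda>x. norm (inv_fourier_transform f x)"])
    show "AE x in lborel. (\<lambda>n. inv_fourier_transform f x * iexp (- 2 * pi * t * x) * exp (- (\<epsilon> n * x)\<^sup>2 / 2))
        \<longlonglongrightarrow> inv_fourier_transform f x * iexp (- 2 * pi * t * x)"
      using \<open>\<epsilon> \<longlonglongrightarrow> 0\<close> by (intro AE_I2) (auto intro!: tendsto_eq_intros)
    show "AE x in lborel. norm (inv_fourier_transform f x * iexp (- 2 * pi * t * x) * exp (- (\<epsilon> n * x)\<^sup>2 / 2))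
        \<le> norm (inv_fourier_transform f x)" for n
      by (intro AE_I2) (simp add: norm_mult mult_left_le)
  qed (use g in \<open>simp_all add: integrable_norm\<close>)
  then have "(\<lambda>n. LINT v|lborel. std_normal_density v *\<^sub>R f (t + \<epsilon> n / (2 * pi) * v))
      \<longlonglongrightarrow> fourier_transform (inv_fourier_transform f) t"
    unfolding fourier_transform_gaussian_regularized[OF f \<open>\<epsilon> _ > 0\<close>] .
  moreover have "(\<lambda>n. \<epsilon> n / (2 * pi)) \<longlonglongrightarrow> 0"
    using tendsto_divide[OF \<open>\<epsilon> \<longlonglongrightarrow> 0\<close> tendsto_const[of "2 * pi"]] by simp
  then have "(\<lambda>n. LINT v|lborel. std_normal_density v *\<^sub>R f (t + \<epsilon> n / (2 * pi) * v)) \<longlonglongrightarrow> f t"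
    by (rule tendsto_integral_std_normal_density_shift[OF f_meas f_bounded \<open>isCont f t\<close>])
  ultimately show ?thesis
    using LIMSEQ_unique by simp
qed

lemma inv_fourier_transform_sums:
  fixes u :: "nat \<Rightarrow> real \<Rightarrow> complex"
  assumes u: "\<And>k. integrable lborel (u k)" and w: "integrable lborel w"
    and bound: "\<And>k s. norm (u k s) \<le> B k * w s" and "summable B"
    and sums: "\<And>s. (\<lambda>k. u k s) sums U s"
  shows "(\<lambda>k. inv_fourier_transform (u k) x) sums inv_fourier_transform U x"
proof -
  define f where "f k = (\<lambda>s. u k s * iexp (2 * pi * s * x))" for k
  have "(\<lambda>k. integral\<^sup>L lborel (f k)) sums (\<integral>s. (\<Sum>k. f k s) \<partial>lborel)"
  proof (rule sums_integral)
    show "integrable lborel (f k)" for k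
      using integrable_mult_iexp[OF u, of k "2 * pi * x"] by (simp add: f_def mult.commute mult.left_commute)
    show "AE s in lborel. summable (\<lambda>k. norm (f k s))"
    proof (rule AE_I2)
      fix s
      show "summable (\<lambda>k. norm (f k s))"
        using bound by (intro summable_comparison_test[OF _ summable_mult2[OF \<open>summable B\<close>, of "w s"]])
          (simp add: f_def norm_mult)
    qed
    have "(\<integral>s. norm (f k s) \<partial>lborel) \<le> (\<integral>s. B k * w s \<partial>lborel)" for k
      using bound order_trans[OF norm_ge_zero bound] by (intro integral_mono' integrable_mult_right w) (simp_all add: f_def norm_mult)
    then show "summable (\<lambda>k. \<integral>s. norm (f k s) \<partial>lborel)"
      by (intro summable_comparison_test[OF _ summable_mult2[OF \<open>summable B\<close>, of "\<integral>s. w s \<partial>lborel"]]) simp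
  qed
  moreover have "(\<Sum>k. f k s) = U s * iexp (2 * pi * s * x)" for s
    unfolding f_def using sums_mult2[OF sums] by (rule sums_unique[symmetric])
  ultimately show ?thesis
    by (simp add: inv_fourier_transform_def f_def)
qed

section \<open>The kernel\<close>

lemma has_integral_iexp_centered_unit_interval:
  "((\<lambda>s. iexp (2 * pi * y * s)) has_integral complex_of_real (sinc (pi * y))) {-1/2..1/2}"
proof (cases "y = 0")
  case True
  then show ?thesis
    using has_integral_const_real[of 1 "-1/2" "1/2"] by simp
next
  case False
  define w where "w = 2 * pi * y"
  define P where "P s = - \<i> * iexp (w * s) / w" for s
  have "w \<noteq> 0" using False by (simp add: w_def)
  have "(P has_vector_derivative iexp (2 * pi * y * s)) (at s within {-1/2..1/2})" for s
    unfolding P_def using \<open>w \<noteq> 0\<close>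
    by (rule_tac derivative_eq_intros has_vector_derivative_iexp_scaled refl)+ (simp_all add: w_def mult_ac)
  then have "((\<lambda>s. iexp (2 * pi * y * s)) has_integral (P (1/2) - P (-1/2))) {-1/2..1/2}"
    by (intro fundamental_theorem_of_calculus) auto
  moreover have "P (1/2) - P (-1/2) = complex_of_real (sin (pi * y) / (pi * y))"
    using False unfolding P_def cis_conv_exp[symmetric] by (simp add: complex_eq_iff w_def field_simps)
  ultimately show ?thesis
    using False by simp
qed

lemma inv_fourier_transform_cos_cutoff:
  "inv_fourier_transform (\<lambda>s. indicator {-1/2..1/2} s *\<^sub>R complex_of_real (2 * cos (2 * pi * m * s))) x =
    complex_of_real (sinc (pi * (x - m)) + sinc (pi * (x + m)))"
proof -
  have "complex_of_real (2 * cos (2 * pi * m * s)) * iexp (2 * pi * x * s) =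
      iexp (2 * pi * (x - m) * s) + iexp (2 * pi * (x + m) * s)" for s
    unfolding cis_conv_exp[symmetric]
    by (simp add: complex_eq_iff algebra_simps cos_add cos_diff sin_add sin_diff)
  moreover have "((\<lambda>s. iexp (2 * pi * (x - m) * s) + iexp (2 * pi * (x + m) * s)) has_integral
      complex_of_real (sinc (pi * (x - m))) + complex_of_real (sinc (pi * (x + m)))) {-1/2..1/2}"
    by (intro has_integral_add has_integral_iexp_centered_unit_interval)
  ultimately show ?thesis
    by (simp add: inv_fourier_transform_indicator_Icc continuous_intros integral_unique)
qed

lemma sums_odd_powers_cos:
  fixes r b :: real
  assumes "\<bar>r\<bar> < 1"
  shows "(\<lambda>k. r ^ (2 * k + 1) * cos ((2 * real k + 1) * b))
    sums (r * (1 - r\<^sup>2) * cos b / (1 - 2 * r\<^sup>2 * cos (2 * b) + r ^ 4))"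
proof -
  define z where "z = complex_of_real r * cis b"
  have "norm (z\<^sup>2) < 1"
    using assms by (simp add: z_def norm_mult norm_power abs_square_less_1)
  then have "(\<lambda>k. z * (z\<^sup>2) ^ k) sums (z * (1 / (1 - z\<^sup>2)))"
    by (intro sums_mult geometric_sums)
  then have "(\<lambda>k. Re (z * (z\<^sup>2) ^ k)) sums Re (z * (1 / (1 - z\<^sup>2)))"
    by (rule sums_Re)
  moreover have "Re (z * (z\<^sup>2) ^ k) = r ^ (2 * k + 1) * cos ((2 * real k + 1) * b)" for k
  proof -
    have "z * (z\<^sup>2) ^ k = z ^ (2 * k + 1)"
      by (simp add: power_mult[symmetric] mult.commute)
    also have "\<dots> = complex_of_real (r ^ (2 * k + 1)) * cis (real (2 * k + 1) * b)"
    proof -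
      have "cis b ^ (2 * k + 1) = cis (real (2 * k + 1) * b)" by (rule Complex.DeMoivre)
      then show ?thesis by (simp add: z_def power_mult_distrib)
    qed
    finally show ?thesis by (simp add: add.commute)
  qed
  moreover have "Re (z * (1 / (1 - z\<^sup>2))) = r * (1 - r\<^sup>2) * cos b / (1 - 2 * r\<^sup>2 * cos (2 * b) + r ^ 4)"
  proof -
    have "z\<^sup>2 = complex_of_real (r\<^sup>2) * cis (2 * b)"
      using Complex.DeMoivre[of b 2] by (simp add: z_def power_mult_distrib)
    then have "Re (z * (1 / (1 - z\<^sup>2))) =
        (r * cos b * (1 - r\<^sup>2 * cos (2 * b)) - r * sin b * (r\<^sup>2 * sin (2 * b))) /
        ((1 - r\<^sup>2 * cos (2 * b))\<^sup>2 + (r\<^sup>2 * sin (2 * b))\<^sup>2)"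
      by (simp add: Re_divide z_def)
    moreover have "(1 - r\<^sup>2 * cos (2 * b))\<^sup>2 + (r\<^sup>2 * sin (2 * b))\<^sup>2 = 1 - 2 * r\<^sup>2 * cos (2 * b) + r ^ 4"
      using sin_cos_squared_add[of "2 * b"] by algebra
    moreover have "r * cos b * (1 - r\<^sup>2 * cos (2 * b)) - r * sin b * (r\<^sup>2 * sin (2 * b)) = r * (1 - r\<^sup>2) * cos b"
      using sin_cos_squared_add[of b] unfolding cos_double sin_double by algebra
    ultimately show ?thesis by simp
  qed
  ultimately show ?thesis by simp
qed

lemma has_sum_int_split:
  fixes g :: "int \<Rightarrow> real"
  assumes s1: "summable (\<lambda>k. norm (g (int k + 1)))" and s2: "summable (\<lambda>k. norm (g (- int k)))"
  shows "(g has_sum (\<Sum>k. g (int k + 1) + g (- int k))) UNIV"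
proof -
  have "(g has_sum (\<Sum>k. g (int k + 1))) (range (\<lambda>k::nat. int k + 1))"
    using has_sum_reindex[of "\<lambda>k::nat. int k + 1" UNIV g] norm_summable_imp_has_sum[OF s1]
      summable_sums[OF summable_norm_cancel[OF s1]]
    by (simp add: inj_def comp_def)
  moreover have "(g has_sum (\<Sum>k. g (- int k))) (range (\<lambda>k::nat. - int k))"
    using has_sum_reindex[of "\<lambda>k::nat. - int k" UNIV g] norm_summable_imp_has_sum[OF s2]
      summable_sums[OF summable_norm_cancel[OF s2]]
    by (simp add: inj_def comp_def)
  moreover have "range (\<lambda>k::nat. int k + 1) \<inter> range (\<lambda>k::nat. - int k) = {}"
    by auto
  moreover have "range (\<lambda>k::nat. int k + 1) \<union> range (\<lambda>k::nat. - int k) = UNIV"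
  proof -
    have "n \<in> range (\<lambda>k::nat. int k + 1) \<or> n \<in> range (\<lambda>k::nat. - int k)" for n :: int
    proof (cases "n \<ge> 1")
      case True
      then have "n = int (nat (n - 1)) + 1" by simp
      then show ?thesis by blast
    next
      case False
      then have "n = - int (nat (- n))" by simp
      then show ?thesis by blast
    qed
    then show ?thesis by blast
  qed
  ultimately have "(g has_sum ((\<Sum>k. g (int k + 1)) + (\<Sum>k. g (- int k)))) UNIV"
    by (metis has_sum_Un_disjoint)
  then show ?thesis
    by (simp add: suminf_add[OF summable_norm_cancel[OF s1] summable_norm_cancel[OF s2]])
qed

lemma abs_sinc_le_1: "\<bar>sinc x\<bar> \<le> 1"
proof (cases "x = 0")
  case False
  then show ?thesis
    using abs_sin_x_le_abs_x[of x] by (simp add: abs_divide divide_le_eq_1)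
qed simp

definition Khat_closed :: "real \<Rightarrow> real \<Rightarrow> real" where
  "Khat_closed lam s = sinh (lam / 2) * cos (pi * s) / ((sinh (lam / 2))\<^sup>2 + (sin (pi * s))\<^sup>2)"

lemma Khat_closed_vanishes_at_half: "Khat_closed lam (1/2) = 0" "Khat_closed lam (- (1/2)) = 0"
  by (simp_all add: Khat_closed_def)

lemma continuous_on_Khat_closed: "lam > 0 \<Longrightarrow> continuous_on S (Khat_closed lam)"
  unfolding Khat_closed_def by (auto intro!: continuous_intros simp: add_pos_nonneg)

lemma Khat_closed_cosine_series:
  assumes "lam > 0"
  shows "(\<lambda>k. 2 * exp (- lam * (real k + 1 / 2)) * cos (2 * pi * (real k + 1 / 2) * s)) sums Khat_closed lam s"
proof -
  define r where "r = exp (- lam / 2)"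
  have "0 < r" "r < 1"
    using assms by (auto simp: r_def)
  have series: "(\<lambda>k. 2 * (r ^ (2 * k + 1) * cos ((2 * real k + 1) * (pi * s)))) sums
      (2 * (r * (1 - r\<^sup>2) * cos (pi * s) / (1 - 2 * r\<^sup>2 * cos (2 * (pi * s)) + r ^ 4)))"
    using \<open>0 < r\<close> \<open>r < 1\<close> by (intro sums_mult sums_odd_powers_cos) simp
  have coeff: "r ^ (2 * k + 1) = exp (- lam * (real k + 1 / 2))" for k
  proof -
    have "r ^ (2 * k + 1) = exp (real (2 * k + 1) * (- lam / 2))"
      unfolding r_def by (rule exp_of_nat_mult[symmetric])
    then show ?thesis by (simp add: algebra_simps)
  qed
  have freq: "(2 * real k + 1) * (pi * s) = 2 * pi * (real k + 1 / 2) * s" for k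
    by (simp add: algebra_simps)
  have sum: "2 * (r * (1 - r\<^sup>2) * cos (pi * s) / (1 - 2 * r\<^sup>2 * cos (2 * (pi * s)) + r ^ 4)) = Khat_closed lam s"
  proof -
    have sinh: "sinh (lam / 2) = (1 - r\<^sup>2) / (2 * r)"
      using \<open>0 < r\<close> by (simp add: sinh_def r_def exp_minus field_simps power2_eq_square)
    define D where "D = (1 - r\<^sup>2)\<^sup>2 + 4 * r\<^sup>2 * (sin (pi * s))\<^sup>2"
    have den: "1 - 2 * r\<^sup>2 * cos (2 * (pi * s)) + r ^ 4 = D"
      unfolding D_def cos_double_sin by (simp add: algebra_simps power2_eq_square power4_eq_xxxx)
    have "D > 0"
      unfolding D_def using \<open>0 < r\<close> \<open>r < 1\<close> power_strict_mono[of r 1 2] by (intro add_pos_nonneg) auto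
    have "(sinh (lam / 2))\<^sup>2 + (sin (pi * s))\<^sup>2 = D / (4 * r\<^sup>2)"
      using \<open>0 < r\<close> unfolding sinh D_def by (simp add: field_simps power2_eq_square)
    then show ?thesis
      using \<open>0 < r\<close> \<open>D > 0\<close> unfolding Khat_closed_def sinh den by (simp add: field_simps power2_eq_square)
  qed
  show ?thesis
    using series unfolding coeff freq sum by (simp add: mult.assoc)
qed

lemma Khat_closed_second_derivative:
  assumes "lam > 0"
  obtains f' f'' where "\<And>s. (Khat_closed lam has_real_derivative f' s) (at s)"
    and "\<And>s. (f' has_real_derivative f'' s) (at s)" and "continuous_on UNIV f''"
proof -
  define c where "c = sinh (lam / 2)"
  define D where "D s = c\<^sup>2 + (sin (pi * s))\<^sup>2" for s
  define D' where "D' s = 2 * sin (pi * s) * cos (pi * s)" for s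
  define N where "N s = sin (pi * s) * (D s + 2 * (cos (pi * s))\<^sup>2)" for s
  define N' where "N' s = cos (pi * s) * (D s + 2 * (cos (pi * s))\<^sup>2) + sin (pi * s) * (D' s - 4 * cos (pi * s) * sin (pi * s))" for s
  have "c > 0" using assms by (simp add: c_def)
  then have D_pos: "D s > 0" for s
    by (simp add: D_def add_pos_nonneg)
  have Khat: "Khat_closed lam = (\<lambda>s. c * cos (pi * s) / D s)"
    by (simp add: fun_eq_iff Khat_closed_def c_def D_def)
  have dD: "(D has_real_derivative pi * D' s) (at s)" for s
    unfolding D_def D'_def by (auto intro!: derivative_eq_intros simp: power2_eq_square)
  have dN: "(N has_real_derivative pi * N' s) (at s)" for s
    unfolding N_def N'_def by (auto intro!: derivative_eq_intros dD simp: power2_eq_square algebra_simps)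
  define f' where "f' s = - pi * c * N s / (D s)\<^sup>2" for s
  define f'' where "f'' s = - pi\<^sup>2 * c * (N' s * D s - 2 * N s * D' s) / (D s) ^ 3" for s
  show ?thesis
  proof
    show "(Khat_closed lam has_real_derivative f' s) (at s)" for s
      unfolding Khat f'_def using D_pos[of s]
      by (auto intro!: derivative_eq_intros dD simp: N_def D'_def field_simps power2_eq_square)
    show "(f' has_real_derivative f'' s) (at s)" for s
      unfolding f'_def[abs_def] f''_def using D_pos[of s]
      by (auto intro!: derivative_eq_intros dD dN simp: field_simps power2_eq_square power3_eq_cube)
    show "continuous_on UNIV f''"
      unfolding f''_def N_def N'_def D_def D'_def using D_pos[unfolded D_def]
      by (auto intro!: continuous_intros)
  qed
qed

definition Khat_cut :: "real \<Rightarrow> real \<Rightarrow> real" where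
  "Khat_cut lam s = indicator {-1/2..1/2} s * Khat_closed lam s"

lemma Khat_cut_clamp: "Khat_cut lam s = Khat_closed lam (max (-1/2) (min (1/2) s))"
proof -
  consider "s < -1/2" | "s \<in> {-1/2..1/2}" | "s > 1/2" by force
  then show ?thesis
    by cases (simp_all add: Khat_cut_def Khat_closed_vanishes_at_half)
qed

lemma isCont_Khat_cut: "lam > 0 \<Longrightarrow> isCont (Khat_cut lam) t"
  unfolding Khat_cut_clamp[abs_def]
  by (intro continuous_on_interior[of UNIV] continuous_on_compose2[OF continuous_on_Khat_closed] continuous_intros) auto

lemma Khat_cut_bounded:
  assumes "lam > 0"
  obtains M where "\<And>s. \<bar>Khat_cut lam s\<bar> \<le> M"
proof -
  have "bounded (Khat_closed lam ` {-1/2..1/2})"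
    by (intro compact_imp_bounded compact_continuous_image continuous_on_Khat_closed assms compact_Icc)
  then obtain M where M: "\<forall>y \<in> Khat_closed lam ` {-1/2..1/2}. norm y \<le> M"
    unfolding bounded_iff by blast
  have "\<bar>Khat_cut lam s\<bar> \<le> M" for s
    unfolding Khat_cut_clamp using M by auto
  then show ?thesis using that by blast
qed

lemma Khat_cut_nonneg:
  assumes "lam > 0"
  shows "0 \<le> Khat_cut lam t"
proof (cases "t \<in> {-1/2..1/2}")
  case True
  then have "- (pi / 2) \<le> pi * t" "pi * t \<le> pi / 2"
    using mult_left_mono[of "-1/2" t pi] mult_left_mono[of t "1/2" pi] by auto
  then have "0 \<le> cos (pi * t)"
    by (rule cos_ge_zero)
  then show ?thesis
    using True assms by (simp add: Khat_cut_def Khat_closed_def add_pos_nonneg)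
qed (simp add: Khat_cut_def)

lemma Khat_cut_cosine_series:
  assumes "lam > 0"
  shows "(\<lambda>k. indicator {-1/2..1/2} s *\<^sub>R complex_of_real (2 * exp (- lam * (real k + 1/2)) * cos (2 * pi * (real k + 1/2) * s)))
    sums complex_of_real (Khat_cut lam s)"
proof -
  have "(\<lambda>k. complex_of_real (2 * exp (- lam * (real k + 1/2)) * cos (2 * pi * (real k + 1/2) * s)))
      sums complex_of_real (Khat_closed lam s)"
    by (rule sums_of_real[OF Khat_closed_cosine_series[OF assms]])
  then have "(\<lambda>k. indicator {-1/2..1/2} s *\<^sub>R complex_of_real (2 * exp (- lam * (real k + 1/2)) * cos (2 * pi * (real k + 1/2) * s)))
      sums (indicator {-1/2..1/2} s *\<^sub>R complex_of_real (Khat_closed lam s))"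
    by (rule sums_scaleR_right)
  then show ?thesis
    by (simp add: Khat_cut_def scaleR_conv_of_real)
qed

lemma summable_exp_neg_mult_half_odd:
  assumes "lam > 0"
  shows "summable (\<lambda>k::nat. exp (- lam * (real k + 1/2)))"
proof -
  have "(\<lambda>k::nat. exp (- lam * (real k + 1/2))) = (\<lambda>k. exp (- lam / 2) * exp (- lam) ^ k)"
    by (simp add: fun_eq_iff exp_of_nat_mult[symmetric] exp_add[symmetric] algebra_simps)
  then show ?thesis
    using assms by (simp add: summable_geometric summable_mult)
qed

definition K_summand :: "real \<Rightarrow> real \<Rightarrow> int \<Rightarrow> real" where
  "K_summand lam x n = (-1) powi n * exp (- lam * \<bar>real_of_int n - 1/2\<bar>) / (x - real_of_int n + 1/2)"

lemma K_eq_infsum_K_summand: "K lam x = cos (pi * x) / pi * (\<Sum>\<^sub>\<infinity>n\<in>UNIV. K_summand lam x n)"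
  by (simp add: K_def K_summand_def)

lemma K_summand_sinc:
  assumes "cos (pi * x) \<noteq> 0"
  shows "cos (pi * x) / pi * K_summand lam x (int k + 1) = exp (- lam * (real k + 1/2)) * sinc (pi * (x - (real k + 1/2)))"
    and "cos (pi * x) / pi * K_summand lam x (- int k) = exp (- lam * (real k + 1/2)) * sinc (pi * (x + (real k + 1/2)))"
proof -
  have nonzero: "y \<noteq> 0" if "sin (pi * y) = c * cos (pi * x)" "c \<noteq> 0" for y c
    using that assms by auto
  have sin: "sin (pi * (x - (real k + 1/2))) = - ((-1) ^ k) * cos (pi * x)"
    by (simp add: sin_diff cos_add sin_add algebra_simps)
  have "sinc (pi * (x - (real k + 1/2))) = - ((-1) ^ k) * cos (pi * x) / (pi * (x - (real k + 1/2)))"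
    using nonzero[OF sin] by (simp add: sin)
  moreover have "\<bar>real_of_int (int k + 1) - 1/2\<bar> = real k + 1/2"
    and "x - real_of_int (int k + 1) + 1/2 = x - (real k + 1/2)"
    and "(-1::real) powi (int k + 1) = - ((-1) ^ k)"
    by (simp_all add: power_int_add)
  ultimately show "cos (pi * x) / pi * K_summand lam x (int k + 1) = exp (- lam * (real k + 1/2)) * sinc (pi * (x - (real k + 1/2)))"
    using nonzero[OF sin] by (simp add: K_summand_def field_simps)
next
  have nonzero: "y \<noteq> 0" if "sin (pi * y) = c * cos (pi * x)" "c \<noteq> 0" for y c
    using that assms by auto
  have sin: "sin (pi * (x + (real k + 1/2))) = (-1) ^ k * cos (pi * x)"
    by (simp add: cos_add sin_add algebra_simps)
  have "sinc (pi * (x + (real k + 1/2))) = (-1) ^ k * cos (pi * x) / (pi * (x + (real k + 1/2)))"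
    using nonzero[OF sin] by (simp add: sin)
  moreover have "\<bar>real_of_int (- int k) - 1/2\<bar> = real k + 1/2"
    and "x - real_of_int (- int k) + 1/2 = x + (real k + 1/2)"
    and "(-1::real) powi (- int k) = (-1) ^ k"
    by (simp_all add: power_int_minus_one_minus)
  ultimately show "cos (pi * x) / pi * K_summand lam x (- int k) = exp (- lam * (real k + 1/2)) * sinc (pi * (x + (real k + 1/2)))"
    using nonzero[OF sin] by (simp add: K_summand_def field_simps)
qed

lemma K_sinc_series:
  assumes "lam > 0" and "cos (pi * x) \<noteq> 0"
  shows "(\<lambda>k. exp (- lam * (real k + 1/2)) *
      (sinc (pi * (x - (real k + 1/2))) + sinc (pi * (x + (real k + 1/2))))) sums K lam x"
proof -
  define E where "E k = exp (- lam * (real k + 1/2))" for k :: nat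
  have "summable E"
    unfolding E_def using assms(1) by (rule summable_exp_neg_mult_half_odd)
  have g_bound: "norm (K_summand lam x n) \<le> E k / \<bar>cos (pi * x) / pi\<bar>"
    if "cos (pi * x) / pi * K_summand lam x n = E k * sinc y" for n k y
  proof -
    have "\<bar>cos (pi * x) / pi\<bar> * \<bar>K_summand lam x n\<bar> = E k * \<bar>sinc y\<bar>"
      using arg_cong[OF that, of abs] by (simp add: abs_mult E_def)
    also have "\<dots> \<le> E k"
      using abs_sinc_le_1[of y] by (simp add: E_def)
    finally show ?thesis
      using assms(2) by (simp add: field_simps)
  qed
  have s1: "summable (\<lambda>k. norm (K_summand lam x (int k + 1)))"
    by (rule summable_comparison_test[OF _ summable_divide[OF \<open>summable E\<close>, of "\<bar>cos (pi * x) / pi\<bar>"]])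
      (use g_bound[OF K_summand_sinc(1)[OF assms(2), of lam, folded E_def]] in \<open>intro exI[of _ 0] allI impI, simp add: E_def\<close>)
  have s2: "summable (\<lambda>k. norm (K_summand lam x (- int k)))"
    by (rule summable_comparison_test[OF _ summable_divide[OF \<open>summable E\<close>, of "\<bar>cos (pi * x) / pi\<bar>"]])
      (use g_bound[OF K_summand_sinc(2)[OF assms(2), of lam, folded E_def]] in \<open>intro exI[of _ 0] allI impI, simp add: E_def\<close>)
  have "infsum (K_summand lam x) UNIV = (\<Sum>k. K_summand lam x (int k + 1) + K_summand lam x (- int k))"
    by (rule infsumI[OF has_sum_int_split[OF s1 s2]])
  moreover have "(\<lambda>k. K_summand lam x (int k + 1) + K_summand lam x (- int k)) sums (\<Sum>k. K_summand lam x (int k + 1) + K_summand lam x (- int k))"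
    using summable_add[OF summable_norm_cancel[OF s1] summable_norm_cancel[OF s2]] by (rule summable_sums)
  ultimately have "(\<lambda>k. cos (pi * x) / pi * (K_summand lam x (int k + 1) + K_summand lam x (- int k))) sums K lam x"
    unfolding K_eq_infsum_K_summand by (intro sums_mult) simp
  then show ?thesis
    unfolding distrib_left K_summand_sinc[OF assms(2)] .
qed

lemma inv_fourier_transform_Khat_cut:
  assumes "lam > 0" and "cos (pi * x) \<noteq> 0"
  shows "inv_fourier_transform (\<lambda>s. complex_of_real (Khat_cut lam s)) x = complex_of_real (K lam x)"
proof -
  define E where "E k = exp (- lam * (real k + 1/2))" for k :: nat
  define u where "u k s = indicator {-1/2..1/2} s *\<^sub>R complex_of_real (2 * E k * cos (2 * pi * (real k + 1/2) * s))" for k s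
  have "(\<lambda>k. inv_fourier_transform (u k) x) sums inv_fourier_transform (\<lambda>s. complex_of_real (Khat_cut lam s)) x"
  proof (rule inv_fourier_transform_sums[where B = "\<lambda>k. 2 * E k" and w = "indicator {-1/2..1/2}"])
    show "integrable lborel (u k)" for k
      unfolding u_def by (intro borel_integrable_compact compact_Icc continuous_intros)
    show "integrable lborel (indicator {-1/2..1/2} :: real \<Rightarrow> real)"
      by simp
    show "norm (u k s) \<le> 2 * E k * indicator {-1/2..1/2} s" for k s
      by (auto simp: u_def E_def norm_mult split: split_indicator)
    show "summable (\<lambda>k. 2 * E k)"
      unfolding E_def by (intro summable_mult summable_exp_neg_mult_half_odd assms(1))
    show "(\<lambda>k. u k s) sums complex_of_real (Khat_cut lam s)" for s
      unfolding u_def E_def by (rule Khat_cut_cosine_series[OF assms(1)])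
  qed
  moreover have "inv_fourier_transform (u k) x =
      complex_of_real (E k * (sinc (pi * (x - (real k + 1/2))) + sinc (pi * (x + (real k + 1/2)))))" for k
  proof -
    have u_eq: "u k = (\<lambda>s. E k *\<^sub>R (indicator {-1/2..1/2} s *\<^sub>R complex_of_real (2 * cos (2 * pi * (real k + 1/2) * s))))"
      by (simp add: fun_eq_iff u_def scaleR_conv_of_real)
    have "inv_fourier_transform (u k) x =
        E k *\<^sub>R inv_fourier_transform (\<lambda>s. indicator {-1/2..1/2} s *\<^sub>R complex_of_real (2 * cos (2 * pi * (real k + 1/2) * s))) x"
      unfolding u_eq inv_fourier_transform_def mult_scaleR_left by (rule integral_scaleR_right)
    then show ?thesis
      unfolding inv_fourier_transform_cos_cutoff by (simp only: scaleR_conv_of_real of_real_mult)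
  qed
  ultimately have "(\<lambda>k. complex_of_real (E k * (sinc (pi * (x - (real k + 1/2))) + sinc (pi * (x + (real k + 1/2))))))
      sums inv_fourier_transform (\<lambda>s. complex_of_real (Khat_cut lam s)) x"
    by simp
  moreover have "(\<lambda>k. complex_of_real (E k * (sinc (pi * (x - (real k + 1/2))) + sinc (pi * (x + (real k + 1/2))))))
      sums complex_of_real (K lam x)"
    unfolding E_def by (rule sums_of_real[OF K_sinc_series[OF assms]])
  ultimately show ?thesis
    by (rule sums_unique2)
qed

lemma integrable_inv_fourier_transform_Khat_cut:
  assumes "lam > 0"
  shows "integrable lborel (inv_fourier_transform (\<lambda>s. complex_of_real (Khat_cut lam s)))"
proof -
  obtain f' f'' where f': "\<And>s. (Khat_closed lam has_real_derivative f' s) (at s)"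
    and f'': "\<And>s. (f' has_real_derivative f'' s) (at s)" and "continuous_on UNIV f''"
    by (fact Khat_closed_second_derivative[OF assms])
  have "integrable lborel (inv_fourier_transform (\<lambda>s. indicator {-1/2..1/2} s *\<^sub>R complex_of_real (Khat_closed lam s)))"
  proof (rule integrable_inv_fourier_transform_C2_cutoff[where f = "\<lambda>s. complex_of_real (Khat_closed lam s)"
      and f' = "\<lambda>s. complex_of_real (f' s)" and f'' = "\<lambda>s. complex_of_real (f'' s)"])
    show "((\<lambda>s. complex_of_real (Khat_closed lam s)) has_vector_derivative complex_of_real (f' s)) (at s within {-1/2..1/2})" for s
      by (rule has_vector_derivative_of_real[OF has_field_derivative_at_within[OF f']])
    show "((\<lambda>s. complex_of_real (f' s)) has_vector_derivative complex_of_real (f'' s)) (at s within {-1/2..1/2})" for s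
      by (rule has_vector_derivative_of_real[OF has_field_derivative_at_within[OF f'']])
    show "continuous_on {-1/2..1/2} (\<lambda>s. complex_of_real (f'' s))"
      using continuous_on_subset[OF \<open>continuous_on UNIV f''\<close>] by (intro continuous_on_of_real) simp
  qed (simp_all add: Khat_closed_vanishes_at_half)
  then show ?thesis
    by (simp add: Khat_cut_def scaleR_conv_of_real)
qed

lemma K_measurable:
  assumes "lam > 0"
  shows "K lam \<in> borel_measurable borel"
proof -
  have [measurable]: "(\<lambda>s. complex_of_real (Khat_cut lam s)) \<in> borel_measurable borel"
    unfolding Khat_cut_def Khat_closed_def by measurable
  have "K lam = (\<lambda>x. if cos (pi * x) = 0 then 0 else Re (inv_fourier_transform (\<lambda>s. complex_of_real (Khat_cut lam s)) x))"
    using inv_fourier_transform_Khat_cut[OF assms] by (auto simp: fun_eq_iff K_def)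
  then show ?thesis
    by simp
qed

lemma Khat_eq_Khat_cut:
  assumes "lam > 0"
  shows "Khat lam t = complex_of_real (Khat_cut lam t)"
proof -
  let ?F = "\<lambda>s. complex_of_real (Khat_cut lam s)"
  have [measurable]: "K lam \<in> borel_measurable borel" "?F \<in> borel_measurable borel"
    unfolding Khat_cut_def Khat_closed_def using K_measurable[OF assms] by measurable
  have "{x. cos (pi * x) = 0} \<subseteq> range (\<lambda>i::int. of_int i / 2)"
    by (auto simp: cos_zero_iff_int field_simps)
  then have "countable {x. cos (pi * x) = 0}"
    by (rule countable_subset) simp
  then have "{x. cos (pi * x) = 0} \<in> null_sets lborel"
    by (rule countable_imp_null_set_lborel)
  then have "AE x in lborel. complex_of_real (K lam x) = inv_fourier_transform ?F x"
    by (rule AE_I') (use inv_fourier_transform_Khat_cut[OF assms] in force)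
  obtain M where "\<And>s. \<bar>Khat_cut lam s\<bar> \<le> M"
    by (fact Khat_cut_bounded[OF assms])
  have "Khat lam t = fourier_transform (\<lambda>x. complex_of_real (K lam x)) t"
    unfolding Khat_def fourier_transform_def e_def by (simp add: algebra_simps)
  also have "\<dots> = fourier_transform (inv_fourier_transform ?F) t"
    unfolding fourier_transform_def
    using \<open>AE x in lborel. complex_of_real (K lam x) = inv_fourier_transform ?F x\<close>
    by (intro integral_cong_AE) (auto elim!: eventually_mono)
  also have "\<dots> = ?F t"
  proof (rule fourier_inversion[where M = M])
    have "integrable lborel (\<lambda>s. indicator {-1/2..1/2} s *\<^sub>R complex_of_real (Khat_closed lam s))"
      by (intro borel_integrable_compact compact_Icc continuous_on_of_real continuous_on_Khat_closed assms)
    then show "integrable lborel ?F"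
      by (simp add: Khat_cut_def scaleR_conv_of_real)
    show "norm (?F s) \<le> M" for s
      by (simp add: \<open>\<And>s. \<bar>Khat_cut lam s\<bar> \<le> M\<close>)
    show "isCont ?F t"
      using isCont_Khat_cut[OF assms] by (rule isCont_of_real)
  qed (rule integrable_inv_fourier_transform_Khat_cut[OF assms])
  finally show ?thesis .
qed

theorem lemma4p2:
  fixes lam :: real
  assumes "lam > 0"
  shows "(\<forall>t::real. \<bar>t\<bar> \<le> 1/2 \<longrightarrow>
            Khat lam t = complex_of_real
              (sinh (lam/2) * cos (pi * t) / ((sinh (lam/2))\<^sup>2 + (sin (pi * t))\<^sup>2)))
         \<and> (\<forall>t::real. Khat lam t \<in> \<real> \<and> 0 \<le> Re (Khat lam t))"
proof (intro conjI allI impI)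
  fix t :: real
  assume "\<bar>t\<bar> \<le> 1/2"
  then have "t \<in> {-1/2..1/2}"
    by auto
  then show "Khat lam t = complex_of_real (sinh (lam/2) * cos (pi * t) / ((sinh (lam/2))\<^sup>2 + (sin (pi * t))\<^sup>2))"
    by (simp add: Khat_eq_Khat_cut[OF assms] Khat_cut_def Khat_closed_def)
next
  fix t :: real
  show "Khat lam t \<in> \<real>" "0 \<le> Re (Khat lam t)"
    by (simp_all add: Khat_eq_Khat_cut[OF assms] Khat_cut_nonneg[OF assms])
qed

end
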